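(* Assume the Rainbow Conjecture (RC) stated in the context holds. Then for all positive integers $n, r$, every digraph on $n$ vertices with no loops and no parallel edges and with minimum out-degree at least $r$ contains a directed cycle of length at most $\lceil n/r \rceil$.
   Context: All digraphs are finite. Rainbow setting: let $G$ be a finite digraph on vertex set $V$ with no loops and no parallel edges (digons allowed), let $k \geq 1$ and $E_1,\dots,E_k \subseteq E(G)$. Each edge $e$ gets the label set $S_e=\{i : e \in E_i\}$, and $G_i=(V,E_i)$. A directed path or directed cycle $P$ in $G$ is rainbow if there is an injective map $\ell: E(P)\to\{1,\dots,k\}$ with $\ell(e)\in S_e$ for every $e \in E(P)$. The Rainbow Conjecture (RC) asserts: for every such $G$, $k$ and $E_1,\dots,E_k$, either $G$ contains a rainbow directed cycle, or there is a vertex $v$ such that the number of vertices $w \neq v$ for which there is a rainbow directed path from $v$ to $w$ is at least $\sum_{i=1}^k \delta^+_{G_i}(v)$, where $\delta^+_{G_i}(v)$ is the out-degree of $v$ in $G_i$. *)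

theory Defs
  imports Complex_Main
begin

(* Edges are ordered pairs, so there are no parallel edges; looplessness
   is an explicit hypothesis; digons (u,v),(v,u) are allowed. *)

definition digraph :: "'a set \<Rightarrow> ('a \<times> 'a) set \<Rightarrow> bool" where
  "digraph V E \<longleftrightarrow> finite V \<and> E \<subseteq> V \<times> V \<and> (\<forall>v. (v, v) \<notin> E)"

definition dpath :: "('a \<times> 'a) set \<Rightarrow> 'a list \<Rightarrow> bool" where
  "dpath E xs \<longleftrightarrow> xs \<noteq> [] \<and> distinct xs \<and>
     (\<forall>i. Suc i < length xs \<longrightarrow> (xs ! i, xs ! Suc i) \<in> E)"

definition path_edges :: "'a list \<Rightarrow> ('a \<times> 'a) set" where
  "path_edges xs = set (zip xs (tl xs))"

(* directed cycle given by its (distinct) vertex sequence; length = number of vertices = number of edges *)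
definition dcycle :: "('a \<times> 'a) set \<Rightarrow> 'a list \<Rightarrow> bool" where
  "dcycle E xs \<longleftrightarrow> length xs \<ge> 2 \<and> dpath E xs \<and> (last xs, hd xs) \<in> E"

definition cycle_edges :: "'a list \<Rightarrow> ('a \<times> 'a) set" where
  "cycle_edges xs = set (zip xs (tl xs @ [hd xs]))"

definition rainbow :: "nat \<Rightarrow> (nat \<Rightarrow> ('a \<times> 'a) set) \<Rightarrow> ('a \<times> 'a) set \<Rightarrow> bool" where
  "rainbow k Es F \<longleftrightarrow>
     (\<exists>l. inj_on l F \<and> (\<forall>e\<in>F. l e \<in> {1..k} \<and> e \<in> Es (l e)))"

definition outdeg :: "('a \<times> 'a) set \<Rightarrow> 'a \<Rightarrow> nat" where
  "outdeg E v = card {w. (v, w) \<in> E}"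

definition rainbow_conjecture :: "'a itself \<Rightarrow> bool" where
  "rainbow_conjecture (_ :: 'a itself) \<longleftrightarrow>
     (\<forall>(V :: 'a set) E k Es.
        digraph V E \<and> V \<noteq> {} \<and> k \<ge> 1 \<and> (\<forall>i\<in>{1..k}. Es i \<subseteq> E) \<longrightarrow>
        (\<exists>xs. dcycle E xs \<and> rainbow k Es (cycle_edges xs)) \<or>
        (\<exists>v\<in>V. card {w. w \<noteq> v \<and>
                    (\<exists>xs. dpath E xs \<and> hd xs = v \<and> last xs = w \<and> rainbow k Es (path_edges xs))}
                 \<ge> (\<Sum>i=1..k. outdeg (Es i) v)))"

end

theory Submission
  imports Defs
begin

text \<open>Apply RC with \<open>k = \<lceil>n/r\<rceil>\<close> colour classes, each equal to the whole edge set.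
  A rainbow cycle has at most \<open>k\<close> edges, hence length at most \<open>\<lceil>n/r\<rceil>\<close>. Otherwise some
  vertex \<open>v\<close> reaches at least \<open>k \<cdot> outdeg v \<ge> k r \<ge> n\<close> other vertices, which is
  impossible in a digraph with \<open>n\<close> vertices.\<close>

lemma card_le_if_rainbow:
  assumes "rainbow k Es F"
  shows "card F \<le> k"
proof -
  obtain l where "inj_on l F" and "l ` F \<subseteq> {1..k}"
    using assms unfolding rainbow_def by blast
  then have "card F \<le> card {1..k}"
    by (intro card_inj_on_le) auto
  then show ?thesis by simp
qed

lemma card_cycle_edges:
  assumes "distinct xs" "xs \<noteq> []"
  shows "card (cycle_edges xs) = length xs"
proof -
  have "distinct (zip xs (tl xs @ [hd xs]))"
    using assms(1) by (rule distinct_zipI1)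
  then have "card (cycle_edges xs) = length (zip xs (tl xs @ [hd xs]))"
    unfolding cycle_edges_def by (rule distinct_card)
  also have "\<dots> = length xs"
    using assms(2) by (cases xs) auto
  finally show ?thesis .
qed

lemma dcycle_length_le_if_rainbow:
  assumes "dcycle E xs" "rainbow k Es (cycle_edges xs)"
  shows "length xs \<le> k"
proof -
  have "distinct xs" "xs \<noteq> []"
    using assms(1) unfolding dcycle_def dpath_def by auto
  then show ?thesis
    using card_le_if_rainbow[OF assms(2)] by (simp add: card_cycle_edges)
qed

lemma dpath_last_in_vertices:
  assumes "digraph V E" "dpath E xs" "last xs \<noteq> hd xs"
  shows "last xs \<in> V"
proof -
  have "xs \<noteq> []"
    using assms(2) unfolding dpath_def by simp
  then have "2 \<le> length xs"
    using assms(3) by (cases xs) (auto simp: Suc_le_eq)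
  then have "Suc (length xs - 2) < length xs" and "xs ! Suc (length xs - 2) = last xs"
    using \<open>xs \<noteq> []\<close> by (simp_all add: last_conv_nth Suc_diff_Suc numeral_2_eq_2)
  then have "(xs ! (length xs - 2), last xs) \<in> E"
    using assms(2) unfolding dpath_def by metis
  then show ?thesis
    using assms(1) unfolding digraph_def by auto
qed

lemma card_dpath_targets_le:
  assumes "digraph V E" "v \<in> V"
  shows "card {w. w \<noteq> v \<and> (\<exists>xs. dpath E xs \<and> hd xs = v \<and> last xs = w \<and> P xs)} \<le> card V - 1"
proof -
  have "{w. w \<noteq> v \<and> (\<exists>xs. dpath E xs \<and> hd xs = v \<and> last xs = w \<and> P xs)} \<subseteq> V - {v}"
    using dpath_last_in_vertices[OF assms(1)] by blast
  moreover have "finite V"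
    using assms(1) unfolding digraph_def by simp
  ultimately show ?thesis
    using assms(2) card_mono[of "V - {v}"] by fastforce
qed

lemma rainbow_conjecture_uniform_colouring:
  assumes "rainbow_conjecture TYPE('a)" "digraph (V :: 'a set) E" "V \<noteq> {}" "k \<ge> 1"
  obtains xs where "dcycle E xs" "length xs \<le> k"
  | v where "v \<in> V" "k * outdeg E v \<le> card {w. w \<noteq> v \<and>
      (\<exists>xs. dpath E xs \<and> hd xs = v \<and> last xs = w \<and> rainbow k (\<lambda>_. E) (path_edges xs))}"
proof -
  have "\<forall>i\<in>{1..k}. (\<lambda>_. E) i \<subseteq> E"
    by simp
  then have "(\<exists>xs. dcycle E xs \<and> rainbow k (\<lambda>_. E) (cycle_edges xs)) \<or>
        (\<exists>v\<in>V. (\<Sum>i=1..k. outdeg E v) \<le> card {w. w \<noteq> v \<and>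
           (\<exists>xs. dpath E xs \<and> hd xs = v \<and> last xs = w \<and> rainbow k (\<lambda>_. E) (path_edges xs))})"
    using assms unfolding rainbow_conjecture_def
    by (elim allE[where x = V] allE[where x = E] allE[where x = k] allE[where x = "\<lambda>_. E"]) simp
  then show ?thesis
  proof
    assume "\<exists>xs. dcycle E xs \<and> rainbow k (\<lambda>_. E) (cycle_edges xs)"
    then show ?thesis
      using that(1) dcycle_length_le_if_rainbow by blast
  next
    assume "\<exists>v\<in>V. (\<Sum>i=1..k. outdeg E v) \<le> card {w. w \<noteq> v \<and>
      (\<exists>xs. dpath E xs \<and> hd xs = v \<and> last xs = w \<and> rainbow k (\<lambda>_. E) (path_edges xs))}"
    then show ?thesis
      using that(2) by auto
  qed
qed

lemma le_nat_ceiling_div_mult: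
  assumes "r > 0"
  shows "n \<le> nat \<lceil>real n / real r\<rceil> * r"
proof -
  have "real r > 0"
    using assms by simp
  then have "real n \<le> real_of_int \<lceil>real n / real r\<rceil> * real r"
    by (metis pos_divide_le_eq le_of_int_ceiling)
  then have "real n \<le> real (nat \<lceil>real n / real r\<rceil>) * real r"
    by simp
  then show ?thesis
    by (metis of_nat_le_iff of_nat_mult)
qed

theorem mainTheorem2:
  assumes RC: "rainbow_conjecture TYPE('a)"
  shows "\<forall>(n::nat) (r::nat) (V :: 'a set) E.
           n \<ge> 1 \<and> r \<ge> 1 \<and> digraph V E \<and> card V = n \<and> (\<forall>v\<in>V. outdeg E v \<ge> r) \<longrightarrow>
           (\<exists>xs. dcycle E xs \<and> int (length xs) \<le> \<lceil>real n / real r\<rceil>)"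
proof (intro allI impI, elim conjE)
  fix n r :: nat and V :: "'a set" and E
  assume "n \<ge> 1" "r \<ge> 1" and G: "digraph V E" and "card V = n"
    and deg: "\<forall>v\<in>V. outdeg E v \<ge> r"
  define k where "k = nat \<lceil>real n / real r\<rceil>"
  have "n \<le> k * r"
    unfolding k_def using \<open>r \<ge> 1\<close> by (simp add: le_nat_ceiling_div_mult)
  then have "k \<ge> 1"
    using \<open>n \<ge> 1\<close> by (cases "k = 0") auto
  have "V \<noteq> {}"
    using \<open>n \<ge> 1\<close> \<open>card V = n\<close> by auto
  show "\<exists>xs. dcycle E xs \<and> int (length xs) \<le> \<lceil>real n / real r\<rceil>"
  proof (rule rainbow_conjecture_uniform_colouring[OF RC G \<open>V \<noteq> {}\<close> \<open>k \<ge> 1\<close>])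
    fix xs
    assume "dcycle E xs" "length xs \<le> k"
    moreover have "int k = \<lceil>real n / real r\<rceil>"
      unfolding k_def by (simp add: order.strict_trans2[OF _ divide_nonneg_nonneg])
    ultimately show ?thesis
      by (metis of_nat_le_iff)
  next
    fix v
    assume "v \<in> V" and targets: "k * outdeg E v \<le> card {w. w \<noteq> v \<and>
      (\<exists>xs. dpath E xs \<and> hd xs = v \<and> last xs = w \<and> rainbow k (\<lambda>_. E) (path_edges xs))}"
    have "n \<le> k * outdeg E v"
      using \<open>n \<le> k * r\<close> deg \<open>v \<in> V\<close> by (meson le_trans mult_le_mono2)
    also have "\<dots> \<le> n - 1"
      using targets card_dpath_targets_le[OF G \<open>v \<in> V\<close>] \<open>card V = n\<close> by (meson le_trans)
    finally show ?thesis using \<open>n \<ge> 1\<close> by simp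
  qed
qed

end
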